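(* Under the standing assumptions (A) below, let $\Omega'=\{t\in[0,L]:\tau(t)\ne\pm\lambda\}\cup\Omega$. If $I$ is any connected component of $\Omega'$, then $\tau(I)$ is contained in a great circle of $S^{n-1}$ through $\lambda$.
   Context: Standing assumptions (A): $n\ge2$, $L>0$, $\beta\colon[0,L]\to(0,\infty)$ of bounded variation with $1/\beta$ bounded; $\tau\in W^{1,\infty}((0,L);S^{n-1})$ with $k=\operatorname{ess\,sup}|\tau'|>0$; $\lambda\in S^{n-1}$ and $u\in W^{1,\infty}((0,L);\mathbb{R}^n)\setminus\{0\}$ such that $u'+(u\cdot\tau')\tau=\beta(\lambda-(\lambda\cdot\tau)\tau)$ and $|u|\tau'=ku$ a.e. in $(0,L)$; $f=k|u|$, which then satisfies $f'=\beta\,\lambda\cdot\tau'$ and $f(\tau''+k^2\tau)=\beta k^2\,\mathrm{proj}^\perp_{\tau,\tau'}(\lambda)$ weakly in $(0,L)$ (where $\mathrm{proj}^\perp_{V,W}$ is the orthogonal projection onto the orthogonal complement of $\mathrm{span}\{V,W\}$); $\Omega=\{t\in[0,L]:f(t)>0\}$ (open relative to $[0,L]$); and $\tau(t),\tau'(t),\lambda$ are linearly dependent for every $t\in\Omega$ (note $\tau'$ is continuous on $\Omega$). *)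

theory Defs
  imports "HOL-Analysis.Analysis" "HOL-Probability.Probability"
begin

definition bounded_variation_on :: "real \<Rightarrow> real \<Rightarrow> (real \<Rightarrow> real) \<Rightarrow> bool" where
  "bounded_variation_on a b g \<longleftrightarrow>
     (\<exists>M. \<forall>ts::real list. sorted ts \<and> set ts \<subseteq> {a..b} \<longrightarrow>
        (\<Sum>i<length ts - 1. \<bar>g (ts ! Suc i) - g (ts ! i)\<bar>) \<le> M)"

definition lin_dep3 :: "'a::real_vector \<Rightarrow> 'a \<Rightarrow> 'a \<Rightarrow> bool" where
  "lin_dep3 x y z \<longleftrightarrow>
     (\<exists>a b c. (a, b, c) \<noteq> (0, 0, 0) \<and> a *\<^sub>R x + b *\<^sub>R y + c *\<^sub>R z = 0)"

definition great_circle :: "'a::euclidean_space set \<Rightarrow> bool" where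
  "great_circle C \<longleftrightarrow> (\<exists>V. subspace V \<and> dim V = 2 \<and> C = V \<inter> sphere 0 1)"

end

theory Submission
  imports Defs
begin

text \<open>Let \<open>perp\<close> be the component of \<open>\<tau>\<close> orthogonal to \<open>\<lambda>\<close>. Off the poles \<open>\<tau> = \<plusminus>\<lambda>\<close>, the
  linear dependence of \<open>\<tau>, \<tau>', \<lambda>\<close> makes \<open>perp'\<close> parallel to \<open>perp\<close> wherever \<open>u \<noteq> 0\<close>, and the
  zeros of \<open>u\<close> there are isolated; so the direction \<open>sgn perp\<close>, being Lipschitz with derivative
  zero almost everywhere, is locally constant. At a pole where \<open>u \<noteq> 0\<close> the curve is \<open>C\<^sup>1\<close> with
  \<open>\<tau>' = k u / |u| \<perp> \<lambda>\<close>, so \<open>perp\<close> leaves the pole along \<open>\<plusminus>u\<close> on both sides. Hence the line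
  \<open>\<real> sgn perp\<close> is locally constant on \<open>\<Omega>'\<close>, thus constant on each component \<open>I\<close>, and \<open>\<tau>(I)\<close>
  lies in the plane spanned by \<open>\<lambda>\<close> and that line.\<close>

lemma norm_eq_1_scaleR_cases:
  fixes x y :: "'a::real_normed_vector"
  assumes "norm x = 1" "norm y = 1" "x = r *\<^sub>R y"
  shows "x = y \<or> x = - y"
proof -
  have "\<bar>r\<bar> = 1" using assms by simp
  then have "r = 1 \<or> r = -1" by linarith
  then show ?thesis using assms(3) by auto
qed

lemma lin_dep3_imp_combination:
  fixes x y z :: "'a::real_normed_vector"
  assumes dep: "lin_dep3 x y z" and unit: "norm x = 1" "norm z = 1" and "x \<noteq> z" "x \<noteq> - z"
  shows "\<exists>\<alpha> \<gamma>. y = \<alpha> *\<^sub>R x + \<gamma> *\<^sub>R z"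
proof -
  obtain a b c where nz: "(a, b, c) \<noteq> (0, 0, 0)" and eq: "a *\<^sub>R x + b *\<^sub>R y + c *\<^sub>R z = 0"
    using dep unfolding lin_dep3_def by blast
  have "b \<noteq> 0"
  proof
    assume "b = 0"
    then have ax: "a *\<^sub>R x = (- c) *\<^sub>R z" using eq by (simp add: add_eq_0_iff)
    show False
    proof (cases "a = 0")
      case True
      then show False using ax nz \<open>b = 0\<close> unit(2) by auto
    next
      case False
      then have "x = inverse a *\<^sub>R (a *\<^sub>R x)" by simp
      also have "\<dots> = (- c / a) *\<^sub>R z" using ax by (simp add: divide_inverse_commute)
      finally show False using norm_eq_1_scaleR_cases unit assms(4,5) by blast
    qed
  qed
  have by_eq: "b *\<^sub>R y = - (a *\<^sub>R x + c *\<^sub>R z)"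
    using eq by (simp add: eq_neg_iff_add_eq_0 algebra_simps)
  have "y = inverse b *\<^sub>R (b *\<^sub>R y)" using \<open>b \<noteq> 0\<close> by simp
  also have "\<dots> = (- a / b) *\<^sub>R x + (- c / b) *\<^sub>R z"
    unfolding by_eq by (simp add: scaleR_add_right scaleR_diff_right divide_inverse mult.commute)
  finally show ?thesis by blast
qed

lemma great_circle_span_orthonormal:
  fixes v w :: "'a::euclidean_space"
  assumes "norm v = 1" "norm w = 1" "v \<bullet> w = 0"
  shows "great_circle (span {v, w} \<inter> sphere 0 1)"
proof -
  have "v \<noteq> w" using assms by auto
  moreover have "independent {v, w}"
    using assms by (intro pairwise_orthogonal_independent)
      (auto simp: pairwise_insert orthogonal_def inner_commute)
  ultimately have "dim (span {v, w}) = 2"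
    by (simp add: dim_span dim_eq_card_independent)
  then show ?thesis
    unfolding great_circle_def by blast
qed

lemma countable_isolated_points:
  fixes Z :: "'a::{metric_space, second_countable_topology} set"
  shows "countable {x\<in>Z. \<not> x islimpt Z}"
proof -
  let ?X = "{x\<in>Z. \<not> x islimpt Z}"
  have "\<exists>e>0. \<forall>y\<in>Z. y \<noteq> x \<longrightarrow> e \<le> dist y x" if "x \<in> ?X" for x
    using that unfolding islimpt_approachable by (auto simp: not_less)
  then obtain e where e: "\<And>x. x \<in> ?X \<Longrightarrow> e x > 0"
    and sep: "\<And>x y. x \<in> ?X \<Longrightarrow> y \<in> Z \<Longrightarrow> y \<noteq> x \<Longrightarrow> e x \<le> dist y x"
    by metis
  let ?B = "\<lambda>x. ball x (e x / 2)"
  have disj: "?B x \<inter> ?B y = {}" if "x \<in> ?X" "y \<in> ?X" "x \<noteq> y" for x y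
  proof -
    have "e x \<le> dist x y" "e y \<le> dist x y"
      using sep[of x y] sep[of y x] that by (auto simp: dist_commute)
    moreover have "dist x y \<le> dist x z + dist z y" for z
      by (rule dist_triangle)
    ultimately show ?thesis
      by (auto simp: mem_ball) (smt (verit, best) dist_commute field_sum_of_halves)
  qed
  have "countable (?B ` ?X)"
    by (rule countable_disjoint_open_subsets) (auto intro!: pairwise_imageI simp: disjnt_def disj)
  moreover have "inj_on ?B ?X"
    using disj e by (fastforce intro!: inj_onI)
  ultimately show ?thesis
    by (rule countable_image_inj_on)
qed

lemma negligible_countable:
  fixes A :: "'a::euclidean_space set"
  assumes "countable A"
  shows "negligible A"
  using negligible_countable_Union[of "(\<lambda>x. {x}) ` A"] assms by auto

lemma norm_sgn_diff_le:
  fixes x y :: "'a::real_normed_vector"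
  assumes "x \<noteq> 0"
  shows "norm (sgn y - sgn x) \<le> 2 * norm (y - x) / norm x"
proof (cases "y = 0")
  case True
  then show ?thesis using assms by (simp add: norm_sgn)
next
  case False
  have nx: "norm x > 0" and ny: "norm y > 0" using assms False by auto
  have "sgn y - sgn x = (y - x) /\<^sub>R norm x + (inverse (norm y) - inverse (norm x)) *\<^sub>R y"
    by (simp add: sgn_div_norm scaleR_diff_right scaleR_diff_left)
  then have "norm (sgn y - sgn x)
      \<le> norm ((y - x) /\<^sub>R norm x) + norm ((inverse (norm y) - inverse (norm x)) *\<^sub>R y)"
    by (simp only: norm_triangle_ineq)
  also have "norm ((y - x) /\<^sub>R norm x) = norm (y - x) / norm x"
    using nx by (simp add: divide_inverse_commute)
  also have "norm ((inverse (norm y) - inverse (norm x)) *\<^sub>R y) = \<bar>norm x - norm y\<bar> / norm x"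
  proof -
    have "inverse (norm y) - inverse (norm x) = (norm x - norm y) / (norm x * norm y)"
      using nx ny by (simp add: field_simps)
    then show ?thesis using ny by (simp add: abs_divide abs_mult)
  qed
  also have "\<bar>norm x - norm y\<bar> / norm x \<le> norm (y - x) / norm x"
    using nx by (intro divide_right_mono) (auto simp: norm_triangle_ineq3 norm_minus_commute)
  finally show ?thesis by simp
qed

lemma lipschitz_on_sgn:
  assumes lip: "C-lipschitz_on S f" and "m > 0" and bound: "\<And>x. x \<in> S \<Longrightarrow> m \<le> norm (f x)"
  shows "(2 * C / m)-lipschitz_on S (\<lambda>x. sgn (f x))"
proof (rule lipschitz_onI)
  show "0 \<le> 2 * C / m" using lipschitz_on_nonneg[OF lip] \<open>m > 0\<close> by simp
  fix x y assume xy: "x \<in> S" "y \<in> S"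
  have "f y \<noteq> 0" using bound[OF xy(2)] \<open>m > 0\<close> by auto
  then have "dist (sgn (f x)) (sgn (f y)) \<le> 2 * dist (f x) (f y) / norm (f y)"
    using norm_sgn_diff_le[of "f y" "f x"] by (simp add: dist_norm)
  also have "\<dots> \<le> 2 * (C * dist x y) / m"
    using lipschitz_onD[OF lip xy] lipschitz_on_nonneg[OF lip] bound[OF xy(2)] \<open>m > 0\<close>
    by (intro frac_le) auto
  finally show "dist (sgn (f x)) (sgn (f y)) \<le> 2 * C / m * dist x y" by simp
qed

lemma sgn_has_vector_derivative_zero:
  fixes f :: "real \<Rightarrow> 'a::real_inner"
  assumes der: "(f has_vector_derivative c *\<^sub>R f x) (at x)" and "f x \<noteq> 0"
  shows "((\<lambda>s. sgn (f s)) has_vector_derivative 0) (at x)"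
proof -
  have "((\<lambda>s. norm (f s)) has_derivative (\<lambda>h. (h *\<^sub>R (c *\<^sub>R f x)) \<bullet> sgn (f x))) (at x)"
    using has_derivative_compose[OF der[unfolded has_vector_derivative_def]
        has_derivative_norm[OF \<open>f x \<noteq> 0\<close>]] .
  moreover have "f x \<bullet> sgn (f x) = norm (f x)"
    using \<open>f x \<noteq> 0\<close> by (simp add: sgn_div_norm power2_eq_square flip: power2_norm_eq_inner)
  ultimately have "((\<lambda>s. norm (f s)) has_real_derivative c * norm (f x)) (at x)"
    by (elim has_derivative_imp_has_field_derivative) (simp add: mult_ac)
  then have "((\<lambda>s. inverse (norm (f s))) has_real_derivative - (c / norm (f x))) (at x)"
    using DERIV_inverse_fun[of "\<lambda>s. norm (f s)"] \<open>f x \<noteq> 0\<close>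
    by (fastforce simp: field_simps power2_eq_square)
  from has_vector_derivative_scaleR[OF this der]
  show ?thesis
    by (simp add: sgn_div_norm divide_inverse_commute)
qed

text \<open>\<open>baby_Sard\<close> is stated for Cartesian spaces, hence the detour through \<open>real^1\<close>.\<close>

lemma negligible_image_zero_derivative:
  fixes f :: "real \<Rightarrow> real"
  assumes der: "\<And>t. t \<in> D \<Longrightarrow> (f has_real_derivative 0) (at t)"
  shows "negligible (f ` D)"
proof -
  let ?g = "\<lambda>x::real^1. vec (f (x$1)) :: real^1"
  have "negligible (?g ` (vec ` D))"
  proof (rule baby_Sard[where f' = "\<lambda>x h. 0"])
    fix x :: "real^1" assume "x \<in> vec ` D"
    then obtain t where t: "t \<in> D" "x = vec t" by auto
    have nth: "((\<lambda>x::real^1. x$1) has_derivative (\<lambda>h. h$1)) (at x)"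
      by (rule bounded_linear.has_derivative [OF bounded_linear_vec_nth]) auto
    have f: "(f has_derivative (*) 0) (at (x$1))"
      using der[OF t(1)] t(2) unfolding has_field_derivative_def by simp
    have vec: "((\<lambda>y. vec y :: real^1) has_derivative (\<lambda>h. vec h)) (at (f (x$1)))"
      by (rule bounded_linear.has_derivative [OF linear_conv_bounded_linear[THEN iffD1, OF linear_vec]]) auto
    have "(?g has_derivative (\<lambda>h. vec (0 * (h$1)))) (at x)"
      using has_derivative_compose[OF has_derivative_compose[OF nth f] vec] by simp
    then show "(?g has_derivative (\<lambda>h. 0)) (at x within vec ` D)"
      by (auto intro: has_derivative_at_withinI simp: vec_0 zero_vec_def[symmetric])
  next
    have "matrix (\<lambda>h::real^1. 0::real^1) = 0"
      by (simp add: matrix_def vec_eq_iff)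
    then show "rank (matrix (\<lambda>h::real^1. 0::real^1)) < CARD(1)" for x :: "real^1"
      by simp
  qed simp
  moreover have "?g ` (vec ` D) = vec ` (f ` D)" by (auto simp: image_iff)
  ultimately have "negligible (vec ` (f ` D) :: (real^1) set)" by simp
  then have "negligible ((\<lambda>x::real^1. x$1) ` (vec ` (f ` D)))"
    by (rule negligible_differentiable_image_negligible[rotated])
       (auto intro: bounded_linear_imp_differentiable_on[OF bounded_linear_vec_nth])
  moreover have "(\<lambda>x::real^1. x$1) ` (vec ` (f ` D)) = f ` D" by (auto simp: image_iff)
  ultimately show ?thesis by simp
qed

text \<open>The image of the null set is null (Lipschitz), the image of the rest is null (Sard),
  but the image of \<open>{a..b}\<close> contains the interval between \<open>f a\<close> and \<open>f b\<close>.\<close>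

lemma has_real_derivative_zero_ae_constant:
  fixes f :: "real \<Rightarrow> real"
  assumes "a \<le> b" and N: "negligible N" and lip: "C-lipschitz_on {a..b} f"
    and der: "\<And>t. t \<in> {a<..<b} - N \<Longrightarrow> (f has_real_derivative 0) (at t)"
  shows "f b = f a"
proof (rule ccontr)
  assume ne: "f b \<noteq> f a"
  have "negligible (f ` (N \<inter> {a..b}))"
  proof (rule negligible_locally_Lipschitz_image)
    show "negligible (N \<inter> {a..b})" by (rule negligible_subset[OF N]) blast
    show "\<exists>T B. open T \<and> x \<in> T \<and> (\<forall>y\<in>N \<inter> {a..b} \<inter> T. norm (f y - f x) \<le> B * norm (y - x))"
      if x: "x \<in> N \<inter> {a..b}" for x
    proof (intro exI[of _ UNIV] exI[of _ C] conjI ballI)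
      fix y assume "y \<in> N \<inter> {a..b} \<inter> UNIV"
      then show "norm (f y - f x) \<le> C * norm (y - x)"
        using lipschitz_onD[OF lip, of y x] x by (simp add: dist_norm)
    qed simp_all
  qed simp
  moreover have "negligible (f ` ({a<..<b} - N))"
    by (rule negligible_image_zero_derivative) (use der in auto)
  ultimately have "negligible (f ` (N \<inter> {a..b}) \<union> f ` ({a<..<b} - N) \<union> {f a, f b})"
    by (simp add: negligible_finite)
  moreover have "{a..b} \<subseteq> (N \<inter> {a..b}) \<union> ({a<..<b} - N) \<union> {a, b}"
    by auto
  then have "f ` {a..b} \<subseteq> f ` (N \<inter> {a..b}) \<union> f ` ({a<..<b} - N) \<union> {f a, f b}"
    by blast
  ultimately have "negligible (f ` {a..b})"
    by (rule negligible_subset)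
  moreover have conn: "connected (f ` {a..b})"
    using lipschitz_on_continuous_on[OF lip] connected_continuous_image connected_Icc by blast
  have fa: "f a \<in> f ` {a..b}" and fb: "f b \<in> f ` {a..b}" using \<open>a \<le> b\<close> by auto
  have "{min (f a) (f b) .. max (f a) (f b)} \<subseteq> f ` {a..b}"
    using connected_contains_Icc[OF conn fa fb] connected_contains_Icc[OF conn fb fa]
    by (cases "f a \<le> f b") (simp_all add: min_def max_def)
  ultimately have "negligible (cbox (min (f a) (f b)) (max (f a) (f b)))"
    using negligible_subset by (metis cbox_interval)
  then have "box (min (f a) (f b)) (max (f a) (f b)) = {}"
    by (simp only: negligible_interval(1))
  then show False
    using ne by (simp add: box_real min_def max_def split: if_splits)
qed

lemma has_vector_derivative_zero_ae_constant:
  fixes f :: "real \<Rightarrow> 'a::real_inner"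
  assumes "a \<le> b" and N: "negligible N" and lip: "C-lipschitz_on {a..b} f"
    and der: "\<And>t. t \<in> {a<..<b} - N \<Longrightarrow> (f has_vector_derivative 0) (at t)"
  shows "f b = f a"
proof -
  define v where "v = f b - f a"
  have "(\<lambda>s. f s \<bullet> v) b = (\<lambda>s. f s \<bullet> v) a"
  proof (rule has_real_derivative_zero_ae_constant[OF \<open>a \<le> b\<close> N])
    show "(C * norm v)-lipschitz_on {a..b} (\<lambda>s. f s \<bullet> v)"
    proof (rule lipschitz_onI)
      fix x y assume "x \<in> {a..b}" "y \<in> {a..b}"
      then have "\<bar>(f x - f y) \<bullet> v\<bar> \<le> C * dist x y * norm v"
        using Cauchy_Schwarz_ineq2[of "f x - f y" v] lipschitz_onD[OF lip]
        by (metis dist_norm mult_right_mono norm_ge_zero order_trans)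
      then show "dist (f x \<bullet> v) (f y \<bullet> v) \<le> C * norm v * dist x y"
        by (simp add: dist_real_def inner_diff_left mult_ac)
    qed (use lipschitz_on_nonneg[OF lip] in simp)
    show "((\<lambda>s. f s \<bullet> v) has_real_derivative 0) (at t)" if "t \<in> {a<..<b} - N" for t
      using has_derivative_inner_left[OF der[OF that, unfolded has_vector_derivative_def], of v]
      by (rule has_derivative_imp_has_field_derivative) simp
  qed
  then have "(f b - f a) \<bullet> v = 0" by (simp add: inner_diff_left)
  then show ?thesis by (simp add: v_def)
qed

text \<open>\<open>f\<close> minus the integral of \<open>g\<close> is Lipschitz with derivative zero almost everywhere,
  hence constant.\<close>

lemma has_vector_derivative_continuous_ae:
  fixes f g :: "real \<Rightarrow> 'a::euclidean_space"
  assumes lip: "C-lipschitz_on {a..b} f" and N: "negligible N" and g: "continuous_on {a..b} g"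
    and der: "\<And>t. t \<in> {a<..<b} - N \<Longrightarrow> (f has_vector_derivative g t) (at t)"
    and x: "x \<in> {a..b}"
  shows "(f has_vector_derivative g x) (at x within {a..b})"
proof -
  define h where "h s = f s - integral {a..s} g" for s
  obtain M where "M > 0" and M: "\<And>s. s \<in> {a..b} \<Longrightarrow> norm (g s) \<le> M"
    using compact_imp_bounded[OF compact_continuous_image[OF g compact_Icc]]
    unfolding bounded_pos by auto
  have int_der: "((\<lambda>s. integral {a..s} g) has_vector_derivative g s) (at s within {a..b})"
    if "s \<in> {a..b}" for s
    by (rule integral_has_vector_derivative[OF g that])
  have lip_int: "M-lipschitz_on {a..b} (\<lambda>s. integral {a..s} g)"
  proof (rule bounded_derivative_imp_lipschitz)
    show "((\<lambda>s. integral {a..s} g) has_derivative (\<lambda>h. h *\<^sub>R g s)) (at s within {a..b})"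
      if "s \<in> {a..b}" for s
      using int_der[OF that] by (simp add: has_vector_derivative_def)
    show "onorm (\<lambda>h. h *\<^sub>R g s) \<le> M" if "s \<in> {a..b}" for s
      using M[OF that] by (simp add: onorm_scaleR_left[OF bounded_linear_ident] onorm_id)
  qed (use \<open>M > 0\<close> in auto)
  have lip_h: "(C + M)-lipschitz_on {a..b} h"
    unfolding h_def using lipschitz_on_diff[OF lip lip_int] .
  have h_const: "h s = h a" if s: "s \<in> {a..b}" for s
  proof (rule has_vector_derivative_zero_ae_constant[OF _ N])
    show "a \<le> s" using s by simp
    show "(C + M)-lipschitz_on {a..s} h"
      by (rule lipschitz_on_subset[OF lip_h]) (use s in simp)
    fix t assume t: "t \<in> {a<..<s} - N"
    then have "t \<in> {a<..<b}" using s by simp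
    then have "((\<lambda>s. integral {a..s} g) has_vector_derivative g t) (at t within {a..b})"
      by (intro int_der) simp
    then have int_t: "((\<lambda>s. integral {a..s} g) has_vector_derivative g t) (at t)"
      using at_within_Icc_at[of a t b] \<open>t \<in> {a<..<b}\<close> by simp
    have f_t: "(f has_vector_derivative g t) (at t)"
      using der \<open>t \<in> {a<..<b}\<close> t by simp
    have "(h has_vector_derivative (g t - g t)) (at t)"
      unfolding h_def using has_vector_derivative_diff[OF f_t int_t] .
    then show "(h has_vector_derivative 0) (at t)" by simp
  qed
  have f_eq: "f s = f a + integral {a..s} g" if "s \<in> {a..b}" for s
    using h_const[OF that] by (simp add: h_def algebra_simps)
  have "((\<lambda>s. f a + integral {a..s} g) has_vector_derivative 0 + g x) (at x within {a..b})"
    using has_vector_derivative_add[OF has_vector_derivative_const int_der[OF x]] .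
  then show ?thesis
    using has_vector_derivative_transform[OF x f_eq] by simp
qed

lemma has_vector_derivative_imp_tendsto_quotient:
  fixes f :: "real \<Rightarrow> 'a::real_normed_vector"
  assumes "(f has_vector_derivative D) (at x within S)"
  shows "((\<lambda>y. (f y - f x) /\<^sub>R (y - x)) \<longlongrightarrow> D) (at x within S)"
proof -
  have "((\<lambda>y. (1 / norm (y - x)) *\<^sub>R (f y - (f x + (y - x) *\<^sub>R D))) \<longlongrightarrow> 0) (at x within S)"
    using assms unfolding has_vector_derivative_def has_derivative_within by simp
  then have "((\<lambda>y. norm ((1 / norm (y - x)) *\<^sub>R (f y - (f x + (y - x) *\<^sub>R D)))) \<longlongrightarrow> 0) (at x within S)"
    by (rule tendsto_norm_zero)
  moreover have "norm ((1 / norm (y - x)) *\<^sub>R (f y - (f x + (y - x) *\<^sub>R D)))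
      = norm ((f y - f x) /\<^sub>R (y - x) - D)" if "y \<noteq> x" for y
  proof -
    have "norm ((1 / norm (y - x)) *\<^sub>R (f y - (f x + (y - x) *\<^sub>R D)))
        = norm ((1 / (y - x)) *\<^sub>R (f y - (f x + (y - x) *\<^sub>R D)))"
      by simp
    also have "(1 / (y - x)) *\<^sub>R (f y - (f x + (y - x) *\<^sub>R D))
        = (1 / (y - x)) *\<^sub>R (f y - f x) - ((1 / (y - x)) * (y - x)) *\<^sub>R D"
      by (simp add: scaleR_diff_right scaleR_add_right)
    also have "\<dots> = (f y - f x) /\<^sub>R (y - x) - D"
      using that by (simp add: divide_inverse)
    finally show ?thesis .
  qed
  then have "\<forall>\<^sub>F y in at x within S. norm ((1 / norm (y - x)) *\<^sub>R (f y - (f x + (y - x) *\<^sub>R D)))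
      = norm ((f y - f x) /\<^sub>R (y - x) - D)"
    by (auto simp: eventually_at_filter)
  ultimately have "((\<lambda>y. norm ((f y - f x) /\<^sub>R (y - x) - D)) \<longlongrightarrow> 0) (at x within S)"
    by (rule Lim_transform_eventually)
  then show ?thesis
    by (simp add: tendsto_norm_zero_iff LIM_zero_iff)
qed

lemma tendsto_sgn_one_sided_at_zero:
  fixes f :: "real \<Rightarrow> 'a::real_normed_vector"
  assumes der: "(f has_vector_derivative D) (at x within S)" and "f x = 0" "D \<noteq> 0"
  shows "((\<lambda>y. sgn (f y)) \<longlongrightarrow> sgn D) (at x within S \<inter> {x<..})"
    and "((\<lambda>y. sgn (f y)) \<longlongrightarrow> - sgn D) (at x within S \<inter> {..<x})"
proof -
  have "((\<lambda>y. sgn (f y /\<^sub>R (y - x))) \<longlongrightarrow> sgn D) (at x within S)"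
    using tendsto_sgn[OF has_vector_derivative_imp_tendsto_quotient[OF der] \<open>D \<noteq> 0\<close>] \<open>f x = 0\<close>
    by simp
  then have lim_right: "((\<lambda>y. sgn (f y /\<^sub>R (y - x))) \<longlongrightarrow> sgn D) (at x within S \<inter> {x<..})"
    and lim_left: "((\<lambda>y. - sgn (f y /\<^sub>R (y - x))) \<longlongrightarrow> - sgn D) (at x within S \<inter> {..<x})"
    by (auto intro: tendsto_within_subset tendsto_minus)
  have "\<forall>\<^sub>F y in at x within S \<inter> {x<..}. sgn (f y /\<^sub>R (y - x)) = sgn (f y)"
    by (auto simp: eventually_at_filter sgn_scaleR)
  then show "((\<lambda>y. sgn (f y)) \<longlongrightarrow> sgn D) (at x within S \<inter> {x<..})"
    by (rule Lim_transform_eventually[OF lim_right])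
  have "\<forall>\<^sub>F y in at x within S \<inter> {..<x}. - sgn (f y /\<^sub>R (y - x)) = sgn (f y)"
    by (auto simp: eventually_at_filter sgn_scaleR)
  then show "((\<lambda>y. sgn (f y)) \<longlongrightarrow> - sgn D) (at x within S \<inter> {..<x})"
    by (rule Lim_transform_eventually[OF lim_left])
qed

lemma vector_derivative_orthogonal_sphere:
  fixes f :: "real \<Rightarrow> 'a::real_inner"
  assumes der: "(f has_vector_derivative D) (at t within S)" and "t \<in> S" "t islimpt S"
    and sphere: "\<And>s. s \<in> S \<Longrightarrow> norm (f s) = 1"
  shows "f t \<bullet> D = 0"
proof -
  have "\<not> trivial_limit (at t within S)"
    using \<open>t islimpt S\<close> trivial_limit_within by blast
  moreover have "((\<lambda>s. f s \<bullet> f s) has_vector_derivative 2 * (f t \<bullet> D)) (at t within S)"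
    using has_derivative_inner[OF der[unfolded has_vector_derivative_def]
        der[unfolded has_vector_derivative_def]]
    by (simp add: has_vector_derivative_def inner_commute[of D] algebra_simps)
  moreover have "((\<lambda>s. f s \<bullet> f s) has_vector_derivative 0) (at t within S)"
  proof (rule has_vector_derivative_transform[OF \<open>t \<in> S\<close>])
    show "f s \<bullet> f s = 1" if "s \<in> S" for s
      using sphere[OF that] by (simp add: norm_eq_1)
  qed (rule has_vector_derivative_const)
  ultimately have "2 * (f t \<bullet> D) = 0"
    by (rule vector_derivative_unique_within)
  then show ?thesis by simp
qed

locale critical_curve =
  fixes L k :: real
    and beta :: "real \<Rightarrow> real"
    and tau tau' u u' :: "real \<Rightarrow> real ^ 'n"
    and lam :: "real ^ 'n"
  assumes L_pos: "L > 0"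
    and beta_pos: "\<forall>t\<in>{0..L}. beta t > 0"
    and tau_lip: "\<exists>C. lipschitz_on C {0..L} tau"
    and tau_sphere: "\<forall>t\<in>{0..L}. norm (tau t) = 1"
    and tau_deriv: "AE t in lebesgue. t \<in> {0<..<L} \<longrightarrow> (tau has_vector_derivative tau' t) (at t)"
    and k_pos: "k > 0"
    and lam_sphere: "norm lam = 1"
    and u_lip: "\<exists>C. lipschitz_on C {0..L} u"
    and u_deriv: "AE t in lebesgue. t \<in> {0<..<L} \<longrightarrow> (u has_vector_derivative u' t) (at t)"
    and ode1: "AE t in lebesgue. t \<in> {0<..<L} \<longrightarrow>
                 u' t + (u t \<bullet> tau' t) *\<^sub>R tau t = beta t *\<^sub>R (lam - (lam \<bullet> tau t) *\<^sub>R tau t)"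
    and ode2: "AE t in lebesgue. t \<in> {0<..<L} \<longrightarrow> norm (u t) *\<^sub>R tau' t = k *\<^sub>R u t"
    and dep: "\<forall>t\<in>{t\<in>{0..L}. k * norm (u t) > 0}. lin_dep3 (tau t) (tau' t) lam"
begin

definition regular :: "real \<Rightarrow> bool" where
  "regular t \<longleftrightarrow> (tau has_vector_derivative tau' t) (at t) \<and> (u has_vector_derivative u' t) (at t) \<and>
     u' t + (u t \<bullet> tau' t) *\<^sub>R tau t = beta t *\<^sub>R (lam - (lam \<bullet> tau t) *\<^sub>R tau t) \<and>
     norm (u t) *\<^sub>R tau' t = k *\<^sub>R u t"

definition perp :: "real \<Rightarrow> real ^ 'n" where
  "perp t = tau t - (lam \<bullet> tau t) *\<^sub>R lam"

definition nonpolar :: "real set" where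
  "nonpolar = {t\<in>{0..L}. tau t \<noteq> lam \<and> tau t \<noteq> - lam}"

text \<open>The unit vector \<open>w \<perp> \<lambda>\<close> with \<open>\<tau>(t) \<in> span {\<lambda>, w}\<close>. At a pole \<open>\<tau>(t) = \<plusminus>\<lambda>\<close> this plane
  is not determined by \<open>\<tau>(t)\<close>; there the curve leaves the pole in the direction of \<open>u(t)\<close>.\<close>

definition circle_dir :: "real \<Rightarrow> real ^ 'n" where
  "circle_dir t = (if perp t = 0 then sgn (u t) else sgn (perp t))"

lemma ae_regular:
  obtains N where "negligible N" "\<And>t. t \<in> {0<..<L} - N \<Longrightarrow> regular t"
proof -
  have "AE t in lebesgue. t \<in> {0<..<L} \<longrightarrow> regular t"
    using tau_deriv u_deriv ode1 ode2 unfolding regular_def by eventually_elim auto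
  then obtain N where N: "{t \<in> space lebesgue. \<not> (t \<in> {0<..<L} \<longrightarrow> regular t)} \<subseteq> N"
    "emeasure lebesgue N = 0" "N \<in> sets lebesgue"
    by (rule AE_E)
  have "negligible N" using N(2,3) by (simp add: negligible_iff_null_sets null_sets_def)
  then show ?thesis by (rule that) (use N(1) in auto)
qed

lemma lam_inner_self [simp]: "lam \<bullet> lam = 1"
  using lam_sphere by (simp add: norm_eq_1)

lemma perp_orthogonal: "perp t \<bullet> lam = 0"
  unfolding perp_def inner_diff_left inner_scaleR_left by (simp add: inner_commute)

lemma perp_eq_0_iff:
  assumes "t \<in> {0..L}"
  shows "perp t = 0 \<longleftrightarrow> tau t = lam \<or> tau t = - lam"
proof
  assume "perp t = 0"
  then have "tau t = (lam \<bullet> tau t) *\<^sub>R lam" by (simp add: perp_def)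
  then show "tau t = lam \<or> tau t = - lam"
    using norm_eq_1_scaleR_cases lam_sphere tau_sphere assms by blast
next
  assume "tau t = lam \<or> tau t = - lam"
  then show "perp t = 0" by (elim disjE) (simp_all add: perp_def)
qed

lemma mem_nonpolar_iff: "t \<in> nonpolar \<longleftrightarrow> t \<in> {0..L} \<and> perp t \<noteq> 0"
  using perp_eq_0_iff by (auto simp: nonpolar_def)

lemma perp_has_vector_derivative:
  assumes "(tau has_vector_derivative D) F"
  shows "(perp has_vector_derivative D - (lam \<bullet> D) *\<^sub>R lam) F"
proof -
  have "bounded_linear (\<lambda>x::real^'n. x - (lam \<bullet> x) *\<^sub>R lam)"
    by (intro bounded_linear_sub bounded_linear_ident bounded_linear_scaleR_const bounded_linear_inner_right)
  from bounded_linear.has_vector_derivative[OF this assms] show ?thesis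
    by (simp add: perp_def[abs_def])
qed

lemma perp_lipschitz:
  obtains C where "C-lipschitz_on {0..L} perp"
proof -
  obtain C where C: "C-lipschitz_on {0..L} tau" using tau_lip by blast
  have bound: "norm (perp x - perp y) \<le> 2 * norm (tau x - tau y)" for x y
  proof -
    let ?d = "tau x - tau y"
    have diff: "perp x - perp y = ?d - (lam \<bullet> ?d) *\<^sub>R lam"
      by (simp add: perp_def inner_diff_right algebra_simps)
    have "norm (perp x - perp y) \<le> norm ?d + norm ((lam \<bullet> ?d) *\<^sub>R lam)"
      unfolding diff by (rule norm_triangle_ineq4)
    moreover have "norm ((lam \<bullet> ?d) *\<^sub>R lam) \<le> norm ?d"
      using Cauchy_Schwarz_ineq2[of lam ?d] lam_sphere by simp
    ultimately show ?thesis by linarith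
  qed
  have "(2 * C)-lipschitz_on {0..L} perp"
  proof (rule lipschitz_onI)
    fix x y assume xy: "x \<in> {0..L}" "y \<in> {0..L}"
    have "dist (perp x) (perp y) \<le> 2 * dist (tau x) (tau y)"
      using bound[of x y] by (simp only: dist_norm)
    also have "\<dots> \<le> 2 * (C * dist x y)"
      using lipschitz_onD[OF C xy] by (rule mult_left_mono) simp
    finally show "dist (perp x) (perp y) \<le> 2 * C * dist x y"
      by (simp only: mult.assoc)
  qed (use lipschitz_on_nonneg[OF C] in simp)
  then show ?thesis by (rule that)
qed

text \<open>At a limit point of zeros \<open>u' = 0\<close>, whereas off the poles the first equation gives
  \<open>u' = \<beta> (\<lambda> - (\<lambda>\<cdot>\<tau>) \<tau>) \<noteq> 0\<close>.\<close>

lemma u_zero_not_limit_point: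
  assumes t: "t \<in> nonpolar" "regular t" "u t = 0"
  shows "\<not> t islimpt {s. u s = 0}"
proof
  let ?Z = "{s. u s = 0}"
  assume "t islimpt ?Z"
  then have "\<not> trivial_limit (at t within ?Z)" using trivial_limit_within by blast
  moreover have "(u has_vector_derivative u' t) (at t within ?Z)"
    using t(2) unfolding regular_def by (blast intro: has_vector_derivative_at_within)
  moreover have "(u has_vector_derivative 0) (at t within ?Z)"
    using t(3) by (intro has_vector_derivative_transform[of t ?Z u "\<lambda>s. 0" 0]) auto
  ultimately have "u' t = 0" by (rule vector_derivative_unique_within)
  moreover have "beta t > 0" using beta_pos t(1) by (auto simp: nonpolar_def)
  ultimately have "lam = (lam \<bullet> tau t) *\<^sub>R tau t"
    using t(2,3) unfolding regular_def by simp
  moreover have "norm (tau t) = 1" using tau_sphere t(1) by (auto simp: nonpolar_def)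
  ultimately have "lam = tau t \<or> lam = - tau t"
    using norm_eq_1_scaleR_cases[OF lam_sphere] by blast
  then show False using t(1) by (auto simp: nonpolar_def)
qed

lemma perp_derivative_parallel:
  assumes t: "t \<in> nonpolar" "u t \<noteq> 0" "regular t"
  shows "\<exists>c. (perp has_vector_derivative c *\<^sub>R perp t) (at t)"
proof -
  have "lin_dep3 (tau t) (tau' t) lam" using dep k_pos t by (auto simp: nonpolar_def)
  then obtain \<alpha> \<gamma> where "tau' t = \<alpha> *\<^sub>R tau t + \<gamma> *\<^sub>R lam"
    using lin_dep3_imp_combination tau_sphere lam_sphere t(1) by (fastforce simp: nonpolar_def)
  then have "tau' t - (lam \<bullet> tau' t) *\<^sub>R lam = \<alpha> *\<^sub>R perp t"
    by (simp add: perp_def inner_add_right algebra_simps)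
  then show ?thesis
    using perp_has_vector_derivative t(3) unfolding regular_def by metis
qed

text \<open>Off the poles \<open>sgn perp\<close> has derivative zero at every regular point where \<open>u \<noteq> 0\<close>;
  the remaining regular points are isolated zeros of \<open>u\<close>, a countable set.\<close>

lemma sgn_perp_eq_if_segment:
  assumes "{min s t..max s t} \<subseteq> nonpolar"
  shows "sgn (perp s) = sgn (perp t)"
proof -
  obtain N where N: "negligible N" and reg: "\<And>t. t \<in> {0<..<L} - N \<Longrightarrow> regular t"
    using ae_regular by blast
  obtain C where C: "C-lipschitz_on {0..L} perp" using perp_lipschitz by blast
  define Z where "Z = {s. u s = 0}"
  define N' where "N' = N \<union> {x\<in>Z. \<not> x islimpt Z}"
  have N': "negligible N'"
    unfolding N'_def by (intro negligible_Un N negligible_countable countable_isolated_points)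
  have "sgn (perp b) = sgn (perp a)" if ab: "a \<le> b" "{a..b} \<subseteq> nonpolar" for a b
  proof -
    have sub: "{a..b} \<subseteq> {0..L}" using ab(2) by (auto simp: nonpolar_def)
    have cont: "continuous_on {a..b} (\<lambda>r. norm (perp r))"
      using lipschitz_on_continuous_on[OF lipschitz_on_subset[OF C sub]] by (intro continuous_intros)
    obtain r where r: "r \<in> {a..b}" "\<And>x. x \<in> {a..b} \<Longrightarrow> norm (perp r) \<le> norm (perp x)"
      using continuous_attains_inf[OF compact_Icc _ cont] ab(1) by auto
    have "norm (perp r) > 0" using r(1) ab(2) by (auto simp: mem_nonpolar_iff)
    then have lip: "(2 * C / norm (perp r))-lipschitz_on {a..b} (\<lambda>x. sgn (perp x))"
      by (rule lipschitz_on_sgn[OF lipschitz_on_subset[OF C sub] _ r(2)])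
    show ?thesis
    proof (rule has_vector_derivative_zero_ae_constant[OF ab(1) N' lip])
      fix t assume t: "t \<in> {a<..<b} - N'"
      then have tS: "t \<in> nonpolar" using ab by auto
      have "t \<in> {0<..<L} - N" using t sub ab by (auto simp: N'_def)
      then have "regular t" by (rule reg)
      moreover have "u t \<noteq> 0"
        using u_zero_not_limit_point[OF tS \<open>regular t\<close>] t by (auto simp: N'_def Z_def)
      ultimately obtain c where "(perp has_vector_derivative c *\<^sub>R perp t) (at t)"
        using perp_derivative_parallel tS by blast
      then show "((\<lambda>x. sgn (perp x)) has_vector_derivative 0) (at t)"
        using sgn_has_vector_derivative_zero tS by (auto simp: mem_nonpolar_iff)
    qed
  qed
  then show ?thesis
    using assms by (cases "s \<le> t") (auto simp: min_def max_def)
qed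

lemma sgn_perp_locally_constant:
  assumes t: "t \<in> nonpolar"
  obtains e where "e > 0"
    "\<And>s. s \<in> {0..L} \<Longrightarrow> \<bar>s - t\<bar> < e \<Longrightarrow> s \<in> nonpolar \<and> sgn (perp s) = sgn (perp t)"
proof -
  obtain C where C: "C-lipschitz_on {0..L} perp" using perp_lipschitz by blast
  define e where "e = norm (perp t) / (C + 1)"
  have C0: "C \<ge> 0" using lipschitz_on_nonneg[OF C] .
  have "e > 0" using t C0 by (simp add: e_def mem_nonpolar_iff)
  have near: "s \<in> nonpolar" if s: "s \<in> {0..L}" "\<bar>s - t\<bar> < e" for s
  proof -
    have "norm (perp t - perp s) \<le> C * \<bar>s - t\<bar>"
      using lipschitz_onD[OF C, of t s] s(1) t
      by (auto simp: dist_norm dist_real_def mem_nonpolar_iff abs_minus_commute)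
    also have "\<dots> \<le> C * e" using s(2) C0 by (intro mult_left_mono) auto
    also have "\<dots> < norm (perp t)"
      using \<open>e > 0\<close> C0 by (simp add: e_def field_simps)
    finally have "perp s \<noteq> 0" by auto
    then show ?thesis using s(1) by (simp add: mem_nonpolar_iff)
  qed
  show ?thesis
  proof (rule that[OF \<open>e > 0\<close>])
    fix s assume s: "s \<in> {0..L}" "\<bar>s - t\<bar> < e"
    have "{min s t..max s t} \<subseteq> nonpolar"
    proof
      fix r assume "r \<in> {min s t..max s t}"
      then show "r \<in> nonpolar"
        using s t by (intro near) (auto simp: nonpolar_def)
    qed
    then show "s \<in> nonpolar \<and> sgn (perp s) = sgn (perp t)"
      using near[OF s] sgn_perp_eq_if_segment by blast
  qed
qed

text \<open>Near a point where \<open>u \<noteq> 0\<close> the second equation makes \<open>\<tau>' = k u / |u|\<close> a.e., which is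
  continuous, so \<open>\<tau>\<close> is differentiable there in the classical sense.\<close>

lemma tau_derivative_where_u_nonzero:
  assumes t0: "t0 \<in> {0..L}" "u t0 \<noteq> 0"
  obtains d where "d > 0"
    "(tau has_vector_derivative (k / norm (u t0)) *\<^sub>R u t0) (at t0 within {0..L} \<inter> cball t0 d)"
proof -
  obtain N where N: "negligible N" and reg: "\<And>t. t \<in> {0<..<L} - N \<Longrightarrow> regular t"
    using ae_regular by blast
  obtain Cu where Cu: "Cu-lipschitz_on {0..L} u" using u_lip by blast
  obtain C where C: "C-lipschitz_on {0..L} tau" using tau_lip by blast
  have Cu0: "Cu \<ge> 0" using lipschitz_on_nonneg[OF Cu] .
  define d where "d = norm (u t0) / (Cu + 1)"
  have "d > 0" using t0 Cu0 by (simp add: d_def)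
  define W where "W = {0..L} \<inter> cball t0 d"
  have W: "W = {max 0 (t0 - d)..min L (t0 + d)}" "W \<subseteq> {0..L}" "t0 \<in> W"
    using \<open>d > 0\<close> t0(1) by (auto simp: W_def cball_eq_atLeastAtMost)
  have u_nz: "u s \<noteq> 0" if "s \<in> W" for s
  proof
    assume "u s = 0"
    then have "norm (u t0) \<le> Cu * \<bar>s - t0\<bar>"
      using lipschitz_onD[OF Cu, of t0 s] that t0(1) W(2)
      by (auto simp: dist_norm dist_real_def abs_minus_commute)
    also have "\<dots> \<le> Cu * d" using that Cu0 by (intro mult_left_mono) (auto simp: W_def dist_real_def)
    also have "\<dots> < norm (u t0)" using \<open>d > 0\<close> Cu0 by (simp add: d_def field_simps)
    finally show False by simp
  qed
  have cont: "continuous_on W (\<lambda>s. (k / norm (u s)) *\<^sub>R u s)"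
    using lipschitz_on_continuous_on[OF lipschitz_on_subset[OF Cu W(2)]] u_nz
    by (intro continuous_intros) auto
  have der_ae: "(tau has_vector_derivative (k / norm (u t)) *\<^sub>R u t) (at t)"
    if t: "t \<in> {max 0 (t0 - d)<..<min L (t0 + d)} - N" for t
  proof -
    have "regular t" using t by (intro reg) auto
    then have ode: "norm (u t) *\<^sub>R tau' t = k *\<^sub>R u t"
      and der: "(tau has_vector_derivative tau' t) (at t)"
      unfolding regular_def by blast+
    have "u t \<noteq> 0" using t u_nz by (auto simp: W(1))
    then have "tau' t = inverse (norm (u t)) *\<^sub>R (norm (u t) *\<^sub>R tau' t)" by simp
    also have "\<dots> = inverse (norm (u t)) *\<^sub>R (k *\<^sub>R u t)" by (simp only: ode)
    also have "\<dots> = (k / norm (u t)) *\<^sub>R u t" by (simp add: divide_inverse_commute)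
    finally show ?thesis using der by simp
  qed
  have lip: "C-lipschitz_on {max 0 (t0 - d)..min L (t0 + d)} tau"
    using lipschitz_on_subset[OF C] by auto
  have "(tau has_vector_derivative (k / norm (u t0)) *\<^sub>R u t0)
      (at t0 within {max 0 (t0 - d)..min L (t0 + d)})"
    by (rule has_vector_derivative_continuous_ae[OF lip N cont[unfolded W(1)] der_ae])
      (use \<open>d > 0\<close> t0(1) in auto)
  then have "(tau has_vector_derivative (k / norm (u t0)) *\<^sub>R u t0) (at t0 within W)"
    by (simp only: W(1))
  then show ?thesis using \<open>d > 0\<close> that W_def by blast
qed

lemma perp_derivative_at_pole:
  assumes t0: "t0 \<in> {0..L}" "perp t0 = 0" "u t0 \<noteq> 0"
  obtains d where "d > 0" "u t0 \<bullet> lam = 0"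
    "(perp has_vector_derivative (k / norm (u t0)) *\<^sub>R u t0) (at t0 within {0..L} \<inter> cball t0 d)"
proof -
  obtain d where "d > 0"
    and der: "(tau has_vector_derivative (k / norm (u t0)) *\<^sub>R u t0) (at t0 within {0..L} \<inter> cball t0 d)"
    using tau_derivative_where_u_nonzero t0(1,3) by blast
  have "{0..L} \<inter> cball t0 d = {max 0 (t0 - d)..min L (t0 + d)}"
    by (auto simp: cball_eq_atLeastAtMost)
  moreover have "max 0 (t0 - d) < min L (t0 + d)" using \<open>d > 0\<close> L_pos t0(1) by auto
  ultimately have "t0 islimpt {0..L} \<inter> cball t0 d" using t0(1) \<open>d > 0\<close> by auto
  then have "tau t0 \<bullet> ((k / norm (u t0)) *\<^sub>R u t0) = 0"
    using vector_derivative_orthogonal_sphere[OF der] t0(1) \<open>d > 0\<close> tau_sphere by auto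
  moreover have "tau t0 = lam \<or> tau t0 = - lam" using perp_eq_0_iff t0(1,2) by blast
  ultimately have "lam \<bullet> u t0 = 0" using k_pos t0(3) by auto
  then show ?thesis
    using that[OF \<open>d > 0\<close>] perp_has_vector_derivative[OF der] by (simp add: inner_commute)
qed

lemma sgn_perp_one_sided:
  assumes J: "is_interval J" "J \<subseteq> {0..L}" "t0 \<notin> J"
    and lim: "((\<lambda>y. sgn (perp y)) \<longlongrightarrow> v) (at t0 within J)" and "v \<noteq> 0"
  shows "\<exists>e>0. \<forall>s\<in>J. \<bar>s - t0\<bar> < e \<longrightarrow> s \<in> nonpolar \<and> sgn (perp s) = v"
proof (cases "t0 islimpt J")
  case False
  then obtain e where "e > 0" and far: "\<And>s. s \<in> J \<Longrightarrow> s \<noteq> t0 \<Longrightarrow> e \<le> \<bar>s - t0\<bar>"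
    unfolding islimpt_approachable dist_real_def by (auto simp: not_less)
  show ?thesis
  proof (intro exI[of _ e] conjI[OF \<open>e > 0\<close>] ballI impI)
    fix s assume s: "s \<in> J" "\<bar>s - t0\<bar> < e"
    then have "s \<noteq> t0" using J(3) by blast
    with far[OF s(1)] s(2) show "s \<in> nonpolar \<and> sgn (perp s) = v" by linarith
  qed
next
  case True
  have "\<forall>\<^sub>F y in at t0 within J. sgn (perp y) \<noteq> 0"
    using tendsto_imp_eventually_ne[OF lim \<open>v \<noteq> 0\<close>] .
  then obtain e where "e > 0" and e0: "\<forall>y\<in>J. y \<noteq> t0 \<and> dist y t0 < e \<longrightarrow> sgn (perp y) \<noteq> 0"
    unfolding eventually_at by blast
  have e: "y \<in> nonpolar" if y: "y \<in> J" "\<bar>y - t0\<bar> < e" for y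
  proof -
    have "y \<noteq> t0" using J(3) y(1) by blast
    then have "sgn (perp y) \<noteq> 0" using e0 y by (simp add: dist_real_def)
    then show ?thesis using J(2) y(1) by (auto simp: mem_nonpolar_iff)
  qed
  show ?thesis
  proof (intro exI[of _ e] conjI[OF \<open>e > 0\<close>] ballI impI)
    fix s assume s: "s \<in> J" "\<bar>s - t0\<bar> < e"
    have "\<forall>\<^sub>F y in at t0 within J. sgn (perp y) = sgn (perp s)"
      unfolding eventually_at
    proof (intro exI[of _ e] conjI ballI impI)
      fix y assume y: "y \<in> J" "y \<noteq> t0 \<and> dist y t0 < e"
      have "min y s \<in> J" "max y s \<in> J" using y(1) s(1) by (simp_all add: min_def max_def)
      have "{min y s..max y s} \<subseteq> nonpolar"
      proof
        fix r assume r: "r \<in> {min y s..max y s}"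
        have "r \<in> J"
          by (rule J(1)[unfolded is_interval_1, rule_format, OF \<open>min y s \<in> J\<close> \<open>max y s \<in> J\<close>])
            (use r in simp)
        moreover have "\<bar>r - t0\<bar> < e"
          using r y(2) s(2) unfolding dist_real_def
          by (auto simp: abs_less_iff min_def max_def split: if_splits)
        ultimately show "r \<in> nonpolar" by (rule e)
      qed
      then show "sgn (perp y) = sgn (perp s)" by (rule sgn_perp_eq_if_segment)
    qed (rule \<open>e > 0\<close>)
    then have "((\<lambda>y. sgn (perp s)) \<longlongrightarrow> v) (at t0 within J)"
      by (rule Lim_transform_eventually[OF lim])
    moreover have "\<not> trivial_limit (at t0 within J)"
      using True trivial_limit_within by blast
    ultimately have "sgn (perp s) = v"
      by (simp add: tendsto_const_iff)
    then show "s \<in> nonpolar \<and> sgn (perp s) = v" using e s by blast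
  qed
qed

text \<open>At a pole \<open>perp\<close> vanishes with derivative parallel to \<open>u(t\<^sub>0)\<close>, so on both sides
  \<open>perp\<close> points along \<open>\<plusminus>u(t\<^sub>0)\<close>.\<close>

lemma sgn_perp_near_pole:
  assumes t0: "t0 \<in> {0..L}" "perp t0 = 0" "u t0 \<noteq> 0"
  obtains e where "e > 0" "\<And>s. s \<in> {0..L} \<Longrightarrow> s \<noteq> t0 \<Longrightarrow> \<bar>s - t0\<bar> < e \<Longrightarrow>
    s \<in> nonpolar \<and> (sgn (perp s) = sgn (u t0) \<or> sgn (perp s) = - sgn (u t0))"
proof -
  obtain d where "d > 0"
    and der: "(perp has_vector_derivative (k / norm (u t0)) *\<^sub>R u t0) (at t0 within {0..L} \<inter> cball t0 d)"
    using perp_derivative_at_pole t0 by blast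
  let ?W = "{0..L} \<inter> cball t0 d"
  let ?P = "\<lambda>s. s \<in> nonpolar \<and> (sgn (perp s) = sgn (u t0) \<or> sgn (perp s) = - sgn (u t0))"
  have D: "(k / norm (u t0)) *\<^sub>R u t0 \<noteq> 0" "sgn ((k / norm (u t0)) *\<^sub>R u t0) = sgn (u t0)"
    using k_pos t0(3) by (simp_all add: sgn_scaleR)
  have side: "\<exists>e>0. \<forall>s\<in>?W \<inter> H. \<bar>s - t0\<bar> < e \<longrightarrow> ?P s" if H: "H = {t0<..} \<or> H = {..<t0}" for H
  proof -
    have "\<exists>v. ((\<lambda>y. sgn (perp y)) \<longlongrightarrow> v) (at t0 within ?W \<inter> H) \<and> (v = sgn (u t0) \<or> v = - sgn (u t0))"
      using H
    proof
      assume "H = {t0<..}"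
      then show ?thesis
        using tendsto_sgn_one_sided_at_zero(1)[OF der t0(2) D(1)] D(2)
        by (intro exI[of _ "sgn (u t0)"]) simp
    next
      assume "H = {..<t0}"
      then show ?thesis
        using tendsto_sgn_one_sided_at_zero(2)[OF der t0(2) D(1)] D(2)
        by (intro exI[of _ "- sgn (u t0)"]) simp
    qed
    then obtain v where lim: "((\<lambda>y. sgn (perp y)) \<longlongrightarrow> v) (at t0 within ?W \<inter> H)"
      and v: "v = sgn (u t0) \<or> v = - sgn (u t0)"
      by blast
    have "v \<noteq> 0" using v t0(3) by (auto simp: sgn_zero_iff)
    have "convex ?W" by (intro convex_Int convex_cball convex_real_interval)
    moreover have "convex H" using H by auto
    ultimately have J: "is_interval (?W \<inter> H)" by (simp add: is_interval_convex_1 convex_Int)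
    have sub: "?W \<inter> H \<subseteq> {0..L}" and notin: "t0 \<notin> ?W \<inter> H" using H by auto
    obtain e where "e > 0" and e: "\<forall>s\<in>?W \<inter> H. \<bar>s - t0\<bar> < e \<longrightarrow> s \<in> nonpolar \<and> sgn (perp s) = v"
      using sgn_perp_one_sided[OF J sub notin lim \<open>v \<noteq> 0\<close>] by blast
    from v show ?thesis
    proof
      assume "v = sgn (u t0)"
      with \<open>e > 0\<close> e show ?thesis by auto
    next
      assume "v = - sgn (u t0)"
      with \<open>e > 0\<close> e show ?thesis by auto
    qed
  qed
  obtain eR where "eR > 0" and eR: "\<And>s. s \<in> ?W \<inter> {t0<..} \<Longrightarrow> \<bar>s - t0\<bar> < eR \<Longrightarrow> ?P s"
    using side[of "{t0<..}"] by blast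
  obtain eL where "eL > 0" and eL: "\<And>s. s \<in> ?W \<inter> {..<t0} \<Longrightarrow> \<bar>s - t0\<bar> < eL \<Longrightarrow> ?P s"
    using side[of "{..<t0}"] by blast
  show ?thesis
  proof (rule that[of "min d (min eR eL)"])
    fix s assume s: "s \<in> {0..L}" "s \<noteq> t0" "\<bar>s - t0\<bar> < min d (min eR eL)"
    then have "s \<in> ?W" by (simp add: dist_real_def abs_minus_commute)
    show "?P s"
    proof (cases "t0 < s")
      case True
      then show ?thesis using eR[of s] \<open>s \<in> ?W\<close> s(3) by simp
    next
      case False
      then have "s < t0" using s(2) by simp
      then show ?thesis using eL[of s] \<open>s \<in> ?W\<close> s(3) by simp
    qed
  qed (use \<open>d > 0\<close> \<open>eR > 0\<close> \<open>eL > 0\<close> in auto)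
qed

lemma circle_dir_unit_orthogonal:
  assumes "t \<in> {0..L}" "perp t \<noteq> 0 \<or> u t \<noteq> 0"
  shows "norm (circle_dir t) = 1" "circle_dir t \<bullet> lam = 0"
proof -
  have "u t \<bullet> lam = 0" if "perp t = 0"
    using perp_derivative_at_pole[of t] assms that by blast
  then show "norm (circle_dir t) = 1" "circle_dir t \<bullet> lam = 0"
    using assms perp_orthogonal[of t] by (auto simp: circle_dir_def sgn_div_norm norm_sgn)
qed

lemma circle_dir_locally_constant_up_to_sign:
  assumes t: "t \<in> {0..L}" "perp t \<noteq> 0 \<or> u t \<noteq> 0"
  obtains e where "e > 0"
    "\<And>s. s \<in> {0..L} \<Longrightarrow> \<bar>s - t\<bar> < e \<Longrightarrow> circle_dir s = circle_dir t \<or> circle_dir s = - circle_dir t"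
proof (cases "perp t = 0")
  case False
  then obtain e where "e > 0"
    and "\<And>s. s \<in> {0..L} \<Longrightarrow> \<bar>s - t\<bar> < e \<Longrightarrow> s \<in> nonpolar \<and> sgn (perp s) = sgn (perp t)"
    using sgn_perp_locally_constant t(1) by (metis mem_nonpolar_iff)
  then show ?thesis
    using that False by (auto simp: circle_dir_def mem_nonpolar_iff)
next
  case True
  then obtain e where "e > 0" and "\<And>s. s \<in> {0..L} \<Longrightarrow> s \<noteq> t \<Longrightarrow> \<bar>s - t\<bar> < e \<Longrightarrow>
      s \<in> nonpolar \<and> (sgn (perp s) = sgn (u t) \<or> sgn (perp s) = - sgn (u t))"
    using sgn_perp_near_pole t by blast
  then show ?thesis
    using that True by (fastforce simp: circle_dir_def mem_nonpolar_iff)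
qed

lemma tau_component_in_great_circle:
  assumes I: "I \<in> components (nonpolar \<union> {t\<in>{0..L}. k * norm (u t) > 0})"
  shows "\<exists>C. great_circle C \<and> lam \<in> C \<and> tau ` I \<subseteq> C"
proof -
  have "connected I" using I by (rule in_components_connected)
  obtain t0 where t0: "t0 \<in> I" using in_components_nonempty[OF I] by blast
  have IL: "t \<in> {0..L}" and Iu: "perp t \<noteq> 0 \<or> u t \<noteq> 0" if "t \<in> I" for t
    using in_components_subset[OF I] that by (auto simp: mem_nonpolar_iff)
  define w where "w = circle_dir t0"
  have "(\<lambda>t. {circle_dir t, - circle_dir t}) constant_on I"
  proof (rule locally_constant_imp_constant[OF \<open>connected I\<close>])
    fix a assume a: "a \<in> I"
    obtain e where "e > 0"
      and e: "\<And>s. s \<in> {0..L} \<Longrightarrow> \<bar>s - a\<bar> < e \<Longrightarrow> circle_dir s = circle_dir a \<or> circle_dir s = - circle_dir a"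
      using circle_dir_locally_constant_up_to_sign IL[OF a] Iu[OF a] by blast
    show "\<exists>T. openin (top_of_set I) T \<and> a \<in> T \<and>
        (\<forall>x\<in>T. {circle_dir x, - circle_dir x} = {circle_dir a, - circle_dir a})"
      using a \<open>e > 0\<close> e IL
      by (intro exI[of _ "I \<inter> ball a e"]) (fastforce simp: openin_open_Int dist_real_def)
  qed
  then have dir: "circle_dir t = w \<or> circle_dir t = - w" if "t \<in> I" for t
    using that t0 unfolding constant_on_def w_def by (metis doubleton_eq_iff insert_iff)
  have "tau t \<in> span {lam, w}" if "t \<in> I" for t
  proof -
    have "perp t = norm (perp t) *\<^sub>R circle_dir t \<or> perp t = 0"
      by (auto simp: circle_dir_def sgn_div_norm)
    then have "perp t \<in> span {lam, w}"
      using dir[OF that] by (metis span_base span_mul span_neg span_zero insertCI scaleR_minus_right)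
    moreover have "tau t = perp t + (lam \<bullet> tau t) *\<^sub>R lam" by (simp add: perp_def)
    ultimately show ?thesis by (metis span_add span_base span_mul insertCI)
  qed
  moreover have "norm w = 1" "w \<bullet> lam = 0"
    using circle_dir_unit_orthogonal IL[OF t0] Iu[OF t0] unfolding w_def by auto
  ultimately show ?thesis
    using great_circle_span_orthonormal[of lam w] lam_sphere tau_sphere IL
    by (intro exI[of _ "span {lam, w} \<inter> sphere 0 1"]) (auto simp: inner_commute intro: span_base)
qed

end

theorem mainTheorem16:
  fixes L k :: real
    and beta :: "real \<Rightarrow> real"
    and tau tau' u u' :: "real \<Rightarrow> real ^ 'n"
    and lam :: "real ^ 'n"
  assumes n2: "CARD('n) \<ge> 2"
    and L_pos: "L > 0"
    and beta_pos: "\<forall>t\<in>{0..L}. beta t > 0"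
    and beta_bv: "bounded_variation_on 0 L beta"
    and beta_inv_bdd: "bounded ((\<lambda>t. 1 / beta t) ` {0..L})"
    and tau_lip: "\<exists>C. lipschitz_on C {0..L} tau"
    and tau_sphere: "\<forall>t\<in>{0..L}. norm (tau t) = 1"
    and tau_deriv: "AE t in lebesgue. t \<in> {0<..<L} \<longrightarrow> (tau has_vector_derivative tau' t) (at t)"
    and k_def: "esssup (lebesgue_on {0<..<L}) (\<lambda>t. ereal (norm (tau' t))) = ereal k"
    and k_pos: "k > 0"
    and lam_sphere: "norm lam = 1"
    and u_lip: "\<exists>C. lipschitz_on C {0..L} u"
    and u_nonzero: "\<exists>t\<in>{0..L}. u t \<noteq> 0"
    and u_deriv: "AE t in lebesgue. t \<in> {0<..<L} \<longrightarrow> (u has_vector_derivative u' t) (at t)"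
    and ode1: "AE t in lebesgue. t \<in> {0<..<L} \<longrightarrow>
                 u' t + (u t \<bullet> tau' t) *\<^sub>R tau t = beta t *\<^sub>R (lam - (lam \<bullet> tau t) *\<^sub>R tau t)"
    and ode2: "AE t in lebesgue. t \<in> {0<..<L} \<longrightarrow> norm (u t) *\<^sub>R tau' t = k *\<^sub>R u t"
    and dep: "\<forall>t\<in>{t\<in>{0..L}. k * norm (u t) > 0}. lin_dep3 (tau t) (tau' t) lam"
  shows "\<forall>I\<in>components ({t\<in>{0..L}. tau t \<noteq> lam \<and> tau t \<noteq> - lam} \<union> {t\<in>{0..L}. k * norm (u t) > 0}).
           \<exists>C. great_circle C \<and> lam \<in> C \<and> tau ` I \<subseteq> C"
proof -
  interpret critical_curve L k beta tau tau' u u' lam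
    using L_pos beta_pos tau_lip tau_sphere tau_deriv k_pos lam_sphere u_lip u_deriv ode1 ode2 dep
    by unfold_locales
  show ?thesis
    using tau_component_in_great_circle unfolding nonpolar_def by blast
qed

end
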